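(* If $\pi\colon\Gamma\to\Lambda$ is an epimorphism of groups, then $r(\Gamma)\ge r(\Lambda)$.
   Context: For finite symmetric $S\subseteq\Gamma$, $\rho(\Gamma,S)$ is the operator norm on $\ell^2(\Gamma)$ of the Markov operator $M_S=\frac1{|S|}\mathbf{1}_S$ acting by left convolution. $r(\Gamma)=-\liminf_S\frac{\ln\rho(\Gamma,S)}{\ln|S|}$, the liminf over the directed set of finite symmetric subsets ordered by inclusion ($\liminf_Sf(S)=\sup_S\inf_{S'\supseteq S}f(S')$). *)

theory Defs
  imports "HOL-Algebra.Group" "HOL-Analysis.Analysis"
begin

text \<open>l2-norm of a complex function on a set A (meaningful for square-summable f).\<close>
definition l2norm :: "'a set \<Rightarrow> ('a \<Rightarrow> complex) \<Rightarrow> real" where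
  "l2norm A f = sqrt (infsum (\<lambda>x. (cmod (f x))^2) A)"

definition l2space :: "'a set \<Rightarrow> ('a \<Rightarrow> complex) set" where
  "l2space A = {f. (\<lambda>x. (cmod (f x))^2) summable_on A}"

text \<open>Markov operator M_S = (1/|S|) 1_S acting by left convolution:
  (M_S f)(x) = (1/|S|) * sum over s in S of f(s^-1 x).\<close>
definition markov_op :: "('a, 'b) monoid_scheme \<Rightarrow> 'a set \<Rightarrow> ('a \<Rightarrow> complex) \<Rightarrow> ('a \<Rightarrow> complex)" where
  "markov_op G S f = (\<lambda>x. complex_of_real (1 / real (card S)) *
      (\<Sum>s\<in>S. f (inv\<^bsub>G\<^esub> s \<otimes>\<^bsub>G\<^esub> x)))"

definition rho :: "('a, 'b) monoid_scheme \<Rightarrow> 'a set \<Rightarrow> real" where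
  "rho G S = Sup {l2norm (carrier G) (markov_op G S f) | f.
                   f \<in> l2space (carrier G) \<and> l2norm (carrier G) f \<le> 1}"

definition fin_sym :: "('a, 'b) monoid_scheme \<Rightarrow> 'a set set" where
  "fin_sym G = {S. S \<subseteq> carrier G \<and> finite S \<and> (\<forall>s\<in>S. inv\<^bsub>G\<^esub> s \<in> S)}"

text \<open>r(G) = - liminf_S ln rho(G,S) / ln |S| over the directed set of finite symmetric
  subsets ordered by inclusion, with liminf_S f(S) = sup_S inf_{S' \<supseteq> S} f(S')
  (computed in the extended reals).\<close>
definition r_exp :: "('a, 'b) monoid_scheme \<Rightarrow> ereal" where
  "r_exp G = - (SUP S\<in>fin_sym G. INF S'\<in>{S'\<in>fin_sym G. S \<subseteq> S'}.
                   ereal (ln (rho G S') / ln (real (card S'))))"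

end

theory Submission
  imports Defs
begin

text \<open>
  Fix a finite symmetric \<open>S\<^sub>0 \<subseteq> \<Gamma>\<close> and put \<open>K = |S\<^sub>0| + 2\<close>. Every finite symmetric
  \<open>T \<supseteq> \<pi>(S\<^sub>0)\<close> lifts to a finite symmetric \<open>S \<supseteq> S\<^sub>0\<close> with \<open>\<pi>(S) = T\<close> whose fibres have at
  most \<open>K\<close> points. Replacing \<open>f \<in> \<ell>\<^sup>2(\<Gamma>)\<close> by its fibrewise norms \<open>F \<in> \<ell>\<^sup>2(\<Lambda>)\<close> gives
  \<open>\<parallel>M\<^sub>S f\<parallel> \<le> K \<parallel>M\<^sub>T F\<parallel>\<close>, hence \<open>\<rho>(\<Gamma>,S) \<le> K \<rho>(\<Lambda>,T)\<close>, while \<open>|T| \<le> |S| \<le> K |T|\<close>.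
  Together with \<open>|T|\<^sup>-\<^sup>1\<^sup>/\<^sup>2 \<le> \<rho>(\<Lambda>,T) \<le> 1\<close> this yields
  \<open>ln \<rho>(\<Gamma>,S) / ln |S| \<le> ln \<rho>(\<Lambda>,T) / ln |T| + 2 ln K / ln |T|\<close>, and the error term
  vanishes as \<open>T\<close> grows. If \<open>\<Lambda>\<close> is finite, \<open>T = \<Lambda>\<close> has \<open>\<rho> = 1\<close> and nothing is to be done.
\<close>

lemma L2_set_sum_le:
  assumes "finite S"
  shows "L2_set (\<lambda>x. \<Sum>s\<in>S. h s x) X \<le> (\<Sum>s\<in>S. L2_set (h s) X)"
  using assms
proof (induction S rule: finite_induct)
  case (insert a S)
  have "L2_set (\<lambda>x. h a x + (\<Sum>s\<in>S. h s x)) X \<le> L2_set (h a) X + L2_set (\<lambda>x. \<Sum>s\<in>S. h s x) X"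
    by (rule L2_set_triangle_ineq)
  with insert show ?case by simp
qed (simp add: L2_set_def)

lemma L2_set_fibres:
  assumes "finite X"
  shows "L2_set g X = L2_set (\<lambda>l. L2_set g {x\<in>X. p x = l}) (p ` X)"
  unfolding L2_set_def using sum.image_gen[OF assms, of "\<lambda>x. (g x)\<^sup>2" p]
  by (simp add: sum_nonneg)

lemma L2_set_group_translate:
  assumes "group G" "s \<in> carrier G" "X \<subseteq> carrier G"
  shows "L2_set (\<lambda>x. g (s \<otimes>\<^bsub>G\<^esub> x)) X = L2_set g ((\<lambda>x. s \<otimes>\<^bsub>G\<^esub> x) ` X)"
  using inj_on_subset[OF group.inj_on_cmult[OF assms(1,2)] assms(3)]
  unfolding L2_set_def by (simp add: sum.reindex o_def)

lemma sum_comp_le_fibre_bound: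
  fixes h :: "'b \<Rightarrow> real"
  assumes "finite S" and "\<And>t. t \<in> p ` S \<Longrightarrow> card {s\<in>S. p s = t} \<le> K"
    and "\<And>t. t \<in> p ` S \<Longrightarrow> 0 \<le> h t"
  shows "(\<Sum>s\<in>S. h (p s)) \<le> real K * (\<Sum>t\<in>p ` S. h t)"
proof -
  have "(\<Sum>s\<in>S. h (p s)) = (\<Sum>t\<in>p ` S. real (card {s\<in>S. p s = t}) * h t)"
    using sum.image_gen[OF assms(1), of "\<lambda>s. h (p s)" p] by simp
  also have "\<dots> \<le> (\<Sum>t\<in>p ` S. real K * h t)"
    using assms(2,3) by (intro sum_mono mult_right_mono) auto
  finally show ?thesis
    by (simp add: sum_distrib_left)
qed

lemma l2norm_nonneg: "0 \<le> l2norm A f"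
  unfolding l2norm_def by (simp add: infsum_nonneg)

lemma l2norm_square: "(l2norm A f)\<^sup>2 = infsum (\<lambda>x. (cmod (f x))\<^sup>2) A"
  unfolding l2norm_def by (simp add: infsum_nonneg)

lemma l2space_subset: "f \<in> l2space A \<Longrightarrow> B \<subseteq> A \<Longrightarrow> f \<in> l2space B"
  unfolding l2space_def by (auto intro: summable_on_subset_banach)

lemma L2_set_le_l2norm:
  assumes "f \<in> l2space A" "finite X" "X \<subseteq> A"
  shows "L2_set (\<lambda>x. cmod (f x)) X \<le> l2norm A f"
  unfolding L2_set_def l2norm_def
  using assms by (intro real_sqrt_le_mono finite_sum_le_infsum) (auto simp: l2space_def)

lemma l2norm_le_if_L2_set_le:
  assumes "\<And>X. finite X \<Longrightarrow> X \<subseteq> A \<Longrightarrow> L2_set (\<lambda>x. cmod (f x)) X \<le> c"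
  shows "f \<in> l2space A" "l2norm A f \<le> c"
proof -
  have c: "0 \<le> c"
    using assms[of "{}"] by simp
  have sums: "(\<Sum>x\<in>X. (cmod (f x))\<^sup>2) \<le> c\<^sup>2" if "finite X" "X \<subseteq> A" for X
    using power_mono[OF assms[OF that], of 2] unfolding L2_set_def by (simp add: sum_nonneg)
  then have summable: "(\<lambda>x. (cmod (f x))\<^sup>2) summable_on A"
    by (intro nonneg_bdd_above_summable_on) (auto simp: bdd_above_def)
  then show "f \<in> l2space A"
    by (simp add: l2space_def)
  have "l2norm A f \<le> sqrt (c\<^sup>2)"
    unfolding l2norm_def using summable sums
    by (intro real_sqrt_le_mono infsum_le_finite_sums) auto
  with c show "l2norm A f \<le> c"
    by simp
qed

lemma l2norm_finite_support:
  assumes "finite F" "F \<subseteq> A" "\<And>x. x \<in> A - F \<Longrightarrow> f x = 0"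
  shows "f \<in> l2space A" "l2norm A f = L2_set (\<lambda>x. cmod (f x)) F"
proof -
  have "((\<lambda>x. (cmod (f x))\<^sup>2) has_sum (\<Sum>x\<in>F. (cmod (f x))\<^sup>2)) F"
    using assms(1) by (rule has_sum_finite)
  also have "?this \<longleftrightarrow> ((\<lambda>x. (cmod (f x))\<^sup>2) has_sum (\<Sum>x\<in>F. (cmod (f x))\<^sup>2)) A"
    by (rule has_sum_cong_neutral) (use assms(2,3) in auto)
  finally have sum: "((\<lambda>x. (cmod (f x))\<^sup>2) has_sum (\<Sum>x\<in>F. (cmod (f x))\<^sup>2)) A" .
  then show "f \<in> l2space A"
    unfolding l2space_def summable_on_def by blast
  show "l2norm A f = L2_set (\<lambda>x. cmod (f x)) F"
    unfolding l2norm_def L2_set_def using sum by (simp add: infsumI)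
qed

section \<open>The Markov operator and \<open>\<rho>\<close>\<close>

lemma cmod_markov_op_le:
  "cmod (markov_op G S f x) \<le> (\<Sum>s\<in>S. cmod (f (inv\<^bsub>G\<^esub> s \<otimes>\<^bsub>G\<^esub> x))) / real (card S)"
proof -
  have "cmod (markov_op G S f x) = cmod (\<Sum>s\<in>S. f (inv\<^bsub>G\<^esub> s \<otimes>\<^bsub>G\<^esub> x)) / real (card S)"
    unfolding markov_op_def by (simp add: norm_mult norm_divide)
  also have "\<dots> \<le> (\<Sum>s\<in>S. cmod (f (inv\<^bsub>G\<^esub> s \<otimes>\<^bsub>G\<^esub> x))) / real (card S)"
    by (intro divide_right_mono norm_sum) simp
  finally show ?thesis .
qed

lemma L2_set_markov_op_le:
  assumes G: "group G" and S: "S \<subseteq> carrier G" "finite S" and X: "finite X" "X \<subseteq> carrier G"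
    and B: "\<And>s. s \<in> S \<Longrightarrow> f \<in> l2space (B s)"
      "\<And>s. s \<in> S \<Longrightarrow> (\<lambda>x. inv\<^bsub>G\<^esub> s \<otimes>\<^bsub>G\<^esub> x) ` X \<subseteq> B s"
  shows "L2_set (\<lambda>x. cmod (markov_op G S f x)) X \<le> (\<Sum>s\<in>S. l2norm (B s) f) / real (card S)"
proof -
  have translate: "L2_set (\<lambda>x. cmod (f (inv\<^bsub>G\<^esub> s \<otimes>\<^bsub>G\<^esub> x))) X \<le> l2norm (B s) f"
    if "s \<in> S" for s
  proof -
    have "inv\<^bsub>G\<^esub> s \<in> carrier G"
      using that S G by (auto intro: group.inv_closed)
    then have "L2_set (\<lambda>x. cmod (f (inv\<^bsub>G\<^esub> s \<otimes>\<^bsub>G\<^esub> x))) X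
        = L2_set (\<lambda>y. cmod (f y)) ((\<lambda>x. inv\<^bsub>G\<^esub> s \<otimes>\<^bsub>G\<^esub> x) ` X)"
      by (rule L2_set_group_translate[OF G _ X(2)])
    also have "\<dots> \<le> l2norm (B s) f"
      using B that X(1) by (intro L2_set_le_l2norm) auto
    finally show ?thesis .
  qed
  have "L2_set (\<lambda>x. cmod (markov_op G S f x)) X
      \<le> L2_set (\<lambda>x. (\<Sum>s\<in>S. cmod (f (inv\<^bsub>G\<^esub> s \<otimes>\<^bsub>G\<^esub> x))) / real (card S)) X"
    by (intro L2_set_mono cmod_markov_op_le) simp
  also have "\<dots> = L2_set (\<lambda>x. \<Sum>s\<in>S. cmod (f (inv\<^bsub>G\<^esub> s \<otimes>\<^bsub>G\<^esub> x))) X / real (card S)"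
    by (simp add: L2_set_left_distrib divide_inverse)
  also have "\<dots> \<le> (\<Sum>s\<in>S. L2_set (\<lambda>x. cmod (f (inv\<^bsub>G\<^esub> s \<otimes>\<^bsub>G\<^esub> x))) X) / real (card S)"
    by (intro divide_right_mono L2_set_sum_le S) simp
  also have "\<dots> \<le> (\<Sum>s\<in>S. l2norm (B s) f) / real (card S)"
    by (intro divide_right_mono sum_mono translate) simp_all
  finally show ?thesis .
qed

lemma markov_op_l2_contraction:
  assumes G: "group G" and S: "S \<subseteq> carrier G" "finite S" and f: "f \<in> l2space (carrier G)"
  shows "markov_op G S f \<in> l2space (carrier G)"
    and "l2norm (carrier G) (markov_op G S f) \<le> l2norm (carrier G) f"
proof -
  interpret group G by fact
  have bound: "L2_set (\<lambda>x. cmod (markov_op G S f x)) X \<le> l2norm (carrier G) f"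
    if X: "finite X" "X \<subseteq> carrier G" for X
  proof -
    have "L2_set (\<lambda>x. cmod (markov_op G S f x)) X \<le> (\<Sum>s\<in>S. l2norm (carrier G) f) / real (card S)"
      by (rule L2_set_markov_op_le[OF G S X f]) (use S X in auto)
    also have "\<dots> \<le> l2norm (carrier G) f"
      using l2norm_nonneg[of "carrier G" f] by (cases "card S = 0") auto
    finally show ?thesis .
  qed
  show "markov_op G S f \<in> l2space (carrier G)"
    and "l2norm (carrier G) (markov_op G S f) \<le> l2norm (carrier G) f"
    using l2norm_le_if_L2_set_le[OF bound] by auto
qed

lemma rho_ge_l2norm:
  assumes "group G" "S \<subseteq> carrier G" "finite S"
    and "f \<in> l2space (carrier G)" "l2norm (carrier G) f \<le> 1"
  shows "l2norm (carrier G) (markov_op G S f) \<le> rho G S"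
  unfolding rho_def
proof (rule cSup_upper)
  show "bdd_above {l2norm (carrier G) (markov_op G S f) |f.
      f \<in> l2space (carrier G) \<and> l2norm (carrier G) f \<le> 1}"
    using markov_op_l2_contraction(2)[OF assms(1-3)] by (intro bdd_aboveI[of _ 1]) force
qed (use assms in blast)

lemma rho_le:
  assumes "\<And>f. f \<in> l2space (carrier G) \<Longrightarrow> l2norm (carrier G) f \<le> 1 \<Longrightarrow>
      l2norm (carrier G) (markov_op G S f) \<le> c"
  shows "rho G S \<le> c"
  unfolding rho_def
proof (rule cSup_least)
  have "(\<lambda>_. 0) \<in> l2space (carrier G)" "l2norm (carrier G) (\<lambda>_. 0) = 0"
    unfolding l2space_def l2norm_def by auto
  then show "{l2norm (carrier G) (markov_op G S f) |f.
      f \<in> l2space (carrier G) \<and> l2norm (carrier G) f \<le> 1} \<noteq> {}"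
    by force
qed (use assms in blast)

lemma rho_le_1:
  assumes "group G" "S \<subseteq> carrier G" "finite S"
  shows "rho G S \<le> 1"
  using markov_op_l2_contraction(2)[OF assms] by (intro rho_le) force

text \<open>The witness is the Dirac function at the identity, which \<open>M\<^sub>S\<close> maps to the uniform
  density on \<open>S\<close>.\<close>
lemma rho_ge_inverse_sqrt_card:
  assumes G: "group G" and S: "S \<subseteq> carrier G" "finite S"
  shows "1 / sqrt (real (card S)) \<le> rho G S"
proof -
  interpret group G by fact
  define \<delta> :: "'a \<Rightarrow> complex" where "\<delta> = (\<lambda>x. if x = \<one>\<^bsub>G\<^esub> then 1 else 0)"
  have \<delta>: "\<delta> \<in> l2space (carrier G)" "l2norm (carrier G) \<delta> = 1"
    using l2norm_finite_support[of "{\<one>\<^bsub>G\<^esub>}" "carrier G" \<delta>] by (auto simp: \<delta>_def)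
  have M\<delta>: "markov_op G S \<delta> x = (if x \<in> S then 1 / real (card S) else 0)" if "x \<in> carrier G" for x
  proof -
    have "inv\<^bsub>G\<^esub> s \<otimes>\<^bsub>G\<^esub> x = \<one>\<^bsub>G\<^esub> \<longleftrightarrow> x = s" if "s \<in> S" for s
      using that \<open>x \<in> carrier G\<close> S by (metis inv_closed inv_inv l_inv subsetD inv_equality)
    then have "(\<Sum>s\<in>S. \<delta> (inv\<^bsub>G\<^esub> s \<otimes>\<^bsub>G\<^esub> x)) = (\<Sum>s\<in>S. if x = s then 1 else 0)"
      unfolding \<delta>_def by (intro sum.cong) auto
    then show ?thesis
      using S(2) by (simp add: markov_op_def)
  qed
  have "l2norm (carrier G) (markov_op G S \<delta>) = L2_set (\<lambda>x. cmod (markov_op G S \<delta> x)) S"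
    using S M\<delta> by (intro l2norm_finite_support(2)) auto
  also have "\<dots> = L2_set (\<lambda>_. 1 / real (card S)) S"
    using S(1) by (intro L2_set_cong) (simp_all add: M\<delta> subset_iff norm_divide)
  also have "\<dots> = 1 / sqrt (real (card S))"
    by (cases "card S = 0") (simp_all add: L2_set_constant real_sqrt_divide field_simps)
  finally show ?thesis
    using rho_ge_l2norm[OF G S \<delta>(1)] \<delta>(2) by simp
qed

lemma rho_pos:
  assumes "group G" "S \<subseteq> carrier G" "finite S" "S \<noteq> {}"
  shows "0 < rho G S"
  using rho_ge_inverse_sqrt_card[OF assms(1-3)] assms(3,4)
  by (smt (verit) card_gt_0_iff divide_pos_pos of_nat_0_less_iff real_sqrt_gt_0_iff)

lemma rho_carrier:
  assumes H: "group H" and fin: "finite (carrier H)"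
  shows "rho H (carrier H) = 1"
proof -
  have n: "card (carrier H) \<noteq> 0"
    using fin monoid.one_closed[OF group.is_monoid[OF H]] by (auto simp: card_eq_0_iff)
  define c :: complex where "c = 1 / sqrt (real (card (carrier H)))"
  have c: "sqrt (real (card (carrier H))) * cmod c = 1"
    using n by (simp add: c_def norm_divide)
  have const: "(\<lambda>_. c) \<in> l2space (carrier H)" "l2norm (carrier H) (\<lambda>_. c) = 1"
    using l2norm_finite_support[OF fin subset_refl, of "\<lambda>_. c"] c
    by (simp_all add: L2_set_constant)
  have "markov_op H (carrier H) (\<lambda>_. c) = (\<lambda>_. c)"
    using n by (simp add: markov_op_def fun_eq_iff)
  then have "1 \<le> rho H (carrier H)"
    using rho_ge_l2norm[OF H subset_refl fin const(1)] const(2) by simp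
  with rho_le_1[OF H subset_refl fin] show ?thesis
    by simp
qed

section \<open>Comparison along a homomorphism\<close>

lemma l2norm_fibre_norms_le:
  fixes p :: "'a \<Rightarrow> 'b"
  assumes f: "f \<in> l2space A"
  defines "F \<equiv> \<lambda>l. complex_of_real (l2norm {x\<in>A. p x = l} f)"
  shows "F \<in> l2space B" and "l2norm B F \<le> l2norm A f"
proof -
  let ?sq = "\<lambda>x. (cmod (f x))\<^sup>2"
  have sq: "?sq summable_on A"
    using f by (simp add: l2space_def)
  have bound: "L2_set (\<lambda>l. cmod (F l)) Y \<le> l2norm A f" if "finite Y" for Y
  proof -
    have "(L2_set (\<lambda>l. cmod (F l)) Y)\<^sup>2 = (\<Sum>l\<in>Y. infsum ?sq {x\<in>A. p x = l})"
      by (simp add: L2_set_def F_def l2norm_nonneg l2norm_square sum_nonneg infsum_nonneg)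
    also have "\<dots> = infsum ?sq (\<Union>l\<in>Y. {x\<in>A. p x = l})"
      using that sq by (intro sum_infsum) (auto intro: summable_on_subset_banach)
    also have "\<dots> \<le> infsum ?sq A"
      using sq by (intro infsum_mono2 summable_on_subset_banach[OF sq]) auto
    also have "\<dots> = (l2norm A f)\<^sup>2"
      by (simp add: l2norm_square)
    finally show ?thesis
      by (simp add: power2_le_iff_abs_le l2norm_nonneg)
  qed
  show "F \<in> l2space B" "l2norm B F \<le> l2norm A f"
    using l2norm_le_if_L2_set_le[OF bound] by auto
qed

text \<open>The translate \<open>s\<inverse> x\<close> of a point \<open>x\<close> in the fibre over \<open>l\<close> lies in the fibre over
  \<open>\<pi>(s)\<inverse> l\<close>, so each summand of \<open>M\<^sub>S f\<close> is controlled by one fibrewise norm of \<open>f\<close>.\<close>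
lemma L2_set_markov_op_fibre_le:
  assumes G: "group G" and H: "group H" and hom: "\<pi> \<in> hom G H"
    and S: "S \<subseteq> carrier G" "finite S"
    and K: "\<And>t. t \<in> \<pi> ` S \<Longrightarrow> card {s\<in>S. \<pi> s = t} \<le> K"
    and f: "f \<in> l2space (carrier G)" and X: "finite X" "X \<subseteq> carrier G"
  defines "F \<equiv> \<lambda>l. complex_of_real (l2norm {x\<in>carrier G. \<pi> x = l} f)"
  shows "L2_set (\<lambda>x. cmod (markov_op G S f x)) {x\<in>X. \<pi> x = l}
    \<le> real K * cmod (markov_op H (\<pi> ` S) F l)"
proof -
  interpret group_hom G H \<pi>
    using G H hom by (simp add: group_hom_def group_hom_axioms_def)
  define h where "h = (\<lambda>t. l2norm {x\<in>carrier G. \<pi> x = inv\<^bsub>H\<^esub> t \<otimes>\<^bsub>H\<^esub> l} f)"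
  have h: "0 \<le> h t" for t
    by (simp add: h_def l2norm_nonneg)
  have "L2_set (\<lambda>x. cmod (markov_op G S f x)) {x\<in>X. \<pi> x = l} \<le> (\<Sum>s\<in>S. h (\<pi> s)) / real (card S)"
    unfolding h_def
  proof (rule L2_set_markov_op_le[OF G S])
    fix s assume "s \<in> S"
    then have s: "s \<in> carrier G"
      using S by auto
    show "(\<lambda>x. inv\<^bsub>G\<^esub> s \<otimes>\<^bsub>G\<^esub> x) ` {x\<in>X. \<pi> x = l}
        \<subseteq> {x\<in>carrier G. \<pi> x = inv\<^bsub>H\<^esub> \<pi> s \<otimes>\<^bsub>H\<^esub> l}"
      using X s by auto
  qed (use X f in \<open>auto intro: l2space_subset\<close>)
  also have "\<dots> \<le> real K * (\<Sum>t\<in>\<pi> ` S. h t) / real (card S)"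
    using S(2) K h by (intro divide_right_mono sum_comp_le_fibre_bound) auto
  also have "\<dots> \<le> real K * (\<Sum>t\<in>\<pi> ` S. h t) / real (card (\<pi> ` S))"
  proof (cases "S = {}")
    case False
    then have "0 < real (card (\<pi> ` S))" "0 < real (card S)"
      using S(2) by (simp_all add: card_gt_0_iff)
    then show ?thesis
      using S(2) h
      by (intro divide_left_mono mult_pos_pos mult_nonneg_nonneg sum_nonneg) (auto simp: card_image_le)
  qed simp
  also have "\<dots> = real K * cmod (markov_op H (\<pi> ` S) F l)"
  proof -
    have "markov_op H (\<pi> ` S) F l = complex_of_real ((\<Sum>t\<in>\<pi> ` S. h t) / real (card (\<pi> ` S)))"
      by (simp add: markov_op_def F_def h_def)
    moreover have "0 \<le> (\<Sum>t\<in>\<pi> ` S. h t) / real (card (\<pi> ` S))"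
      using h by (simp add: sum_nonneg)
    ultimately show ?thesis
      by (simp only: norm_of_real abs_of_nonneg) simp
  qed
  finally show ?thesis .
qed

lemma rho_le_rho_image:
  assumes G: "group G" and H: "group H" and hom: "\<pi> \<in> hom G H"
    and S: "S \<subseteq> carrier G" "finite S"
    and K: "\<And>t. t \<in> \<pi> ` S \<Longrightarrow> card {s\<in>S. \<pi> s = t} \<le> K"
  shows "rho G S \<le> real K * rho H (\<pi> ` S)"
proof (rule rho_le)
  fix f assume f: "f \<in> l2space (carrier G)" and norm: "l2norm (carrier G) f \<le> 1"
  define F where "F = (\<lambda>l. complex_of_real (l2norm {x\<in>carrier G. \<pi> x = l} f))"
  have F: "F \<in> l2space (carrier H)" "l2norm (carrier H) F \<le> 1"
    using l2norm_fibre_norms_le[OF f, where p = \<pi> and B = "carrier H"] norm by (auto simp: F_def)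
  have TS: "\<pi> ` S \<subseteq> carrier H"
    using S hom by (auto simp: hom_in_carrier)
  have MF: "markov_op H (\<pi> ` S) F \<in> l2space (carrier H)"
    using markov_op_l2_contraction(1)[OF H TS _ F(1)] S(2) by simp
  have "L2_set (\<lambda>x. cmod (markov_op G S f x)) X \<le> real K * rho H (\<pi> ` S)"
    if X: "finite X" "X \<subseteq> carrier G" for X
  proof -
    have "L2_set (\<lambda>x. cmod (markov_op G S f x)) X
        = L2_set (\<lambda>l. L2_set (\<lambda>x. cmod (markov_op G S f x)) {x\<in>X. \<pi> x = l}) (\<pi> ` X)"
      using X(1) by (rule L2_set_fibres)
    also have "\<dots> \<le> L2_set (\<lambda>l. real K * cmod (markov_op H (\<pi> ` S) F l)) (\<pi> ` X)"
      unfolding F_def by (intro L2_set_mono L2_set_markov_op_fibre_le[OF G H hom S K f X] L2_set_nonneg)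
    also have "\<dots> = real K * L2_set (\<lambda>l. cmod (markov_op H (\<pi> ` S) F l)) (\<pi> ` X)"
      by (simp add: L2_set_right_distrib)
    also have "\<dots> \<le> real K * l2norm (carrier H) (markov_op H (\<pi> ` S) F)"
      using X hom MF by (intro mult_left_mono L2_set_le_l2norm) (auto simp: hom_in_carrier)
    also have "\<dots> \<le> real K * rho H (\<pi> ` S)"
      using S(2) by (intro mult_left_mono rho_ge_l2norm[OF H TS _ F]) auto
    finally show ?thesis .
  qed
  then show "l2norm (carrier G) (markov_op G S f) \<le> real K * rho H (\<pi> ` S)"
    by (rule l2norm_le_if_L2_set_le)
qed

section \<open>Lifting finite symmetric sets\<close>

lemma fin_sym_Un: "S \<in> fin_sym G \<Longrightarrow> T \<in> fin_sym G \<Longrightarrow> S \<union> T \<in> fin_sym G"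
  unfolding fin_sym_def by blast

lemma fin_sym_symmetrize:
  assumes "group G" "A \<subseteq> carrier G" "finite A"
  shows "A \<union> (\<lambda>x. inv\<^bsub>G\<^esub> x) ` A \<in> fin_sym G"
  using assms unfolding fin_sym_def by (auto intro: group.inv_closed simp: group.inv_inv)

lemma fin_sym_large_superset:
  assumes "group H" "infinite (carrier H)" "U \<subseteq> carrier H" "finite U"
  obtains T where "T \<in> fin_sym H" "U \<subseteq> T" "N \<le> card T"
proof -
  obtain A where A: "A \<subseteq> carrier H" "finite A" "card A = N"
    using infinite_arbitrarily_large[OF assms(2)] by blast
  let ?T = "(U \<union> A) \<union> (\<lambda>x. inv\<^bsub>H\<^esub> x) ` (U \<union> A)"
  have "?T \<in> fin_sym H"
    using assms(1,3,4) A(1,2) by (intro fin_sym_symmetrize) auto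
  moreover have "N \<le> card ?T"
    unfolding A(3)[symmetric] using A(2) assms(4) by (intro card_mono) auto
  ultimately show ?thesis
    using that by blast
qed

lemma fin_sym_inv_image:
  assumes "group G" "S \<in> fin_sym G"
  shows "(\<lambda>x. inv\<^bsub>G\<^esub> x) ` S = S"
proof
  show "(\<lambda>x. inv\<^bsub>G\<^esub> x) ` S \<subseteq> S"
    using assms(2) by (auto simp: fin_sym_def)
  show "S \<subseteq> (\<lambda>x. inv\<^bsub>G\<^esub> x) ` S"
  proof
    fix x assume "x \<in> S"
    with assms have "x = inv\<^bsub>G\<^esub> (inv\<^bsub>G\<^esub> x)" "inv\<^bsub>G\<^esub> x \<in> S"
      by (auto simp: fin_sym_def group.inv_inv)
    then show "x \<in> (\<lambda>x. inv\<^bsub>G\<^esub> x) ` S"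
      by (rule image_eqI)
  qed
qed

lemma card_fibre_symmetric_lift_le:
  assumes G: "group G" and H: "group H" and hom: "\<pi> \<in> hom G H"
    and S\<^sub>0: "finite S\<^sub>0" and T: "T \<subseteq> carrier H"
    and lift: "\<And>t. t \<in> carrier H \<Longrightarrow> lift t \<in> carrier G \<and> \<pi> (lift t) = t"
  shows "card {s \<in> S\<^sub>0 \<union> (lift ` T \<union> (\<lambda>x. inv\<^bsub>G\<^esub> x) ` lift ` T). \<pi> s = t} \<le> card S\<^sub>0 + 2"
proof -
  interpret group_hom G H \<pi>
    using G H hom by (simp add: group_hom_def group_hom_axioms_def)
  have "{s \<in> S\<^sub>0 \<union> (lift ` T \<union> (\<lambda>x. inv\<^bsub>G\<^esub> x) ` lift ` T). \<pi> s = t}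
      \<subseteq> S\<^sub>0 \<union> {lift t, inv\<^bsub>G\<^esub> lift (inv\<^bsub>H\<^esub> t)}" (is "?F \<subseteq> _")
  proof
    fix s assume s: "s \<in> ?F"
    consider "s \<in> S\<^sub>0" | u where "u \<in> T" "s = lift u" | u where "u \<in> T" "s = inv\<^bsub>G\<^esub> lift u"
      using s by auto
    then show "s \<in> S\<^sub>0 \<union> {lift t, inv\<^bsub>G\<^esub> lift (inv\<^bsub>H\<^esub> t)}"
    proof cases
      case (2 u)
      then show ?thesis
        using s lift T by auto
    next
      case (3 u)
      then have "u \<in> carrier H" "inv\<^bsub>H\<^esub> u = t"
        using s lift T by auto
      then have "u = inv\<^bsub>H\<^esub> t"
        by (metis group.inv_inv[OF H])
      with 3 show ?thesis
        by simp
    qed simp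
  qed
  then have "card ?F \<le> card (S\<^sub>0 \<union> {lift t, inv\<^bsub>G\<^esub> lift (inv\<^bsub>H\<^esub> t)})"
    using S\<^sub>0 by (intro card_mono) auto
  also have "\<dots> \<le> card S\<^sub>0 + card {lift t, inv\<^bsub>G\<^esub> lift (inv\<^bsub>H\<^esub> t)}"
    by (rule card_Un_le)
  also have "\<dots> \<le> card S\<^sub>0 + 2"
    by (simp add: card_insert_le_m1)
  finally show ?thesis .
qed

text \<open>Take \<open>S = S\<^sub>0 \<union> L \<union> L\<inverse>\<close> with \<open>L\<close> the image of \<open>T\<close> under a section of \<open>\<pi>\<close>: the fibre
  over \<open>t\<close> meets \<open>L \<union> L\<inverse>\<close> only in the lifts of \<open>t\<close> and of \<open>t\<inverse>\<close> (inverted).\<close>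
lemma fin_sym_lift:
  assumes G: "group G" and H: "group H" and epi: "\<pi> \<in> epi G H"
    and S\<^sub>0: "S\<^sub>0 \<in> fin_sym G" and T: "T \<in> fin_sym H" and sub: "\<pi> ` S\<^sub>0 \<subseteq> T"
  obtains S where "S \<in> fin_sym G" "S\<^sub>0 \<subseteq> S" "\<pi> ` S = T"
    "\<And>t. t \<in> T \<Longrightarrow> card {s\<in>S. \<pi> s = t} \<le> card S\<^sub>0 + 2"
proof -
  have hom: "\<pi> \<in> hom G H" and surj: "\<pi> ` carrier G = carrier H"
    using epi by (simp_all add: epi_def)
  interpret group_hom G H \<pi>
    using G H hom by (simp add: group_hom_def group_hom_axioms_def)
  define lift where "lift = inv_into (carrier G) \<pi>"
  have lift: "lift t \<in> carrier G" "\<pi> (lift t) = t" if "t \<in> carrier H" for t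
    using that surj unfolding lift_def by (auto intro: inv_into_into f_inv_into_f)
  have TH: "T \<subseteq> carrier H" "finite T"
    using T by (auto simp: fin_sym_def)
  define L where "L = lift ` T"
  define S where "S = S\<^sub>0 \<union> (L \<union> (\<lambda>x. inv\<^bsub>G\<^esub> x) ` L)"
  have "(\<lambda>t. \<pi> (lift t)) ` T = (\<lambda>t. t) ` T"
    by (rule image_cong) (use TH(1) lift(2) in auto)
  then have L: "L \<subseteq> carrier G" "finite L" "\<pi> ` L = T"
    using TH(1,2) lift(1) by (auto simp: L_def image_image)
  have "S \<in> fin_sym G"
    unfolding S_def by (rule fin_sym_Un[OF S\<^sub>0 fin_sym_symmetrize[OF G L(1,2)]])
  moreover have "\<pi> ` S = T"
  proof -
    have "\<pi> ` (\<lambda>x. inv\<^bsub>G\<^esub> x) ` L = (\<lambda>x. inv\<^bsub>H\<^esub> \<pi> x) ` L"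
      unfolding image_image by (rule image_cong) (use L(1) in auto)
    also have "\<dots> = T"
      using fin_sym_inv_image[OF H T] by (simp add: L(3) image_image[symmetric])
    finally show ?thesis
      using sub L(3) by (auto simp: S_def image_Un)
  qed
  moreover have "card {s\<in>S. \<pi> s = t} \<le> card S\<^sub>0 + 2" for t
    unfolding S_def L_def using S\<^sub>0 TH(1) lift
    by (intro card_fibre_symmetric_lift_le[OF G H hom]) (auto simp: fin_sym_def)
  moreover have "S\<^sub>0 \<subseteq> S"
    by (simp add: S_def)
  ultimately show ?thesis
    using that by blast
qed

section \<open>The exponent \<open>r\<close>\<close>

lemma div_le_div_add_of_bounds:
  fixes a b m n k :: real
  assumes "0 < m" "0 \<le> k" "- m / 2 \<le> a" "b \<le> 0" "b \<le> k + a" "m \<le> n" "n \<le> k + m"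
  shows "b / n \<le> a / m + 2 * k / m"
proof (cases "0 \<le> k + a")
  case True
  have "b / n \<le> 0"
    using assms by (simp add: divide_nonpos_pos)
  also have "0 \<le> (a + k) / m"
    using True assms by simp
  also have "\<dots> \<le> a / m + 2 * k / m"
    using assms by (simp add: divide_simps)
  finally show ?thesis .
next
  case False
  have "b / n \<le> (k + a) / n"
    using assms by (simp add: divide_right_mono)
  also have "\<dots> \<le> (k + a) / (k + m)"
    using False assms by (intro divide_left_mono_neg) auto
  also have "\<dots> \<le> a / m + 2 * k / m"
  proof -
    have "0 \<le> k * (a + m + 2 * k)"
      using assms by (intro mult_nonneg_nonneg) auto
    then have "m * (k + a) \<le> a * (k + m) + 2 * k * (k + m)"
      by (simp add: algebra_simps)
    then show ?thesis
      using assms by (simp add: divide_simps) (simp add: algebra_simps)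
  qed
  finally show ?thesis .
qed

lemma ln_ratio_comparison:
  fixes nS nT K \<rho>S \<rho>T :: real
  assumes n: "2 \<le> nT" "nT \<le> nS" "nS \<le> K * nT" and K: "1 \<le> K"
    and \<rho>: "0 < \<rho>S" "\<rho>S \<le> 1" "1 / sqrt nT \<le> \<rho>T" "\<rho>S \<le> K * \<rho>T"
  shows "ln \<rho>S / ln nS \<le> ln \<rho>T / ln nT + 2 * ln K / ln nT"
proof (rule div_le_div_add_of_bounds)
  have "0 < 1 / sqrt nT"
    using n by simp
  then have \<rho>T: "0 < \<rho>T"
    using \<rho>(3) by linarith
  have "ln (1 / sqrt nT) \<le> ln \<rho>T"
    using \<rho>(3) \<open>0 < 1 / sqrt nT\<close> \<rho>T by simp
  then show "- ln nT / 2 \<le> ln \<rho>T"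
    using n by (simp add: ln_div ln_sqrt)
  have "ln \<rho>S \<le> ln (K * \<rho>T)"
    using \<rho>(1,4) by (subst ln_le_cancel_iff) auto
  then show "ln \<rho>S \<le> ln K + ln \<rho>T"
    using \<rho>T K by (simp add: ln_mult)
  have "ln nS \<le> ln (K * nT)"
    using n by (subst ln_le_cancel_iff) auto
  then show "ln nS \<le> ln K + ln nT"
    using n K by (simp add: ln_mult)
qed (use n K \<rho> in auto)

definition liminf_incl :: "'s set set \<Rightarrow> ('s set \<Rightarrow> real) \<Rightarrow> ereal" where
  "liminf_incl A f = (SUP S\<^sub>0\<in>A. INF S\<in>{S\<in>A. S\<^sub>0 \<subseteq> S}. ereal (f S))"

lemma liminf_incl_mono:
  assumes "\<And>S\<^sub>0 e. S\<^sub>0 \<in> A \<Longrightarrow> 0 < e \<Longrightarrow>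
      \<exists>T\<^sub>0\<in>B. \<forall>T\<in>B. T\<^sub>0 \<subseteq> T \<longrightarrow> (\<exists>S\<in>A. S\<^sub>0 \<subseteq> S \<and> f S \<le> g T + e)"
  shows "liminf_incl A f \<le> liminf_incl B g"
  unfolding liminf_incl_def
proof (rule SUP_least)
  fix S\<^sub>0 assume S\<^sub>0: "S\<^sub>0 \<in> A"
  let ?I = "INF S\<in>{S\<in>A. S\<^sub>0 \<subseteq> S}. ereal (f S)"
  show "?I \<le> (SUP T\<^sub>0\<in>B. INF T\<in>{T\<in>B. T\<^sub>0 \<subseteq> T}. ereal (g T))"
  proof (rule ereal_le_epsilon2)
    fix e :: real assume e: "0 < e"
    obtain T\<^sub>0 where T\<^sub>0: "T\<^sub>0 \<in> B" "\<forall>T\<in>B. T\<^sub>0 \<subseteq> T \<longrightarrow> (\<exists>S\<in>A. S\<^sub>0 \<subseteq> S \<and> f S \<le> g T + e)"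
      using assms[OF S\<^sub>0 e] by blast
    have "?I - ereal e \<le> ereal (g T)" if T: "T \<in> B" "T\<^sub>0 \<subseteq> T" for T
    proof -
      obtain S where "S \<in> A" "S\<^sub>0 \<subseteq> S" "f S \<le> g T + e"
        using T\<^sub>0(2) T by blast
      then have "?I \<le> ereal (g T) + ereal e"
        by (intro INF_lower2[of S]) auto
      then show ?thesis
        by (simp add: ereal_minus_le)
    qed
    then have "?I - ereal e \<le> (INF T\<in>{T\<in>B. T\<^sub>0 \<subseteq> T}. ereal (g T))"
      by (intro INF_greatest) auto
    also have "\<dots> \<le> (SUP T\<^sub>0\<in>B. INF T\<in>{T\<in>B. T\<^sub>0 \<subseteq> T}. ereal (g T))"
      using T\<^sub>0(1) by (rule SUP_upper)
    finally show "?I \<le> (SUP T\<^sub>0\<in>B. INF T\<in>{T\<in>B. T\<^sub>0 \<subseteq> T}. ereal (g T)) + ereal e"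
      by (simp add: ereal_minus_le)
  qed
qed

definition rho_exponent :: "('a, 'b) monoid_scheme \<Rightarrow> 'a set \<Rightarrow> real" where
  "rho_exponent G S = ln (rho G S) / ln (real (card S))"

lemma r_exp_eq_liminf_incl: "r_exp G = - liminf_incl (fin_sym G) (rho_exponent G)"
  unfolding r_exp_def liminf_incl_def rho_exponent_def ..

lemma rho_exponent_nonpos:
  assumes "group G" "S \<subseteq> carrier G" "finite S" "S \<noteq> {}"
  shows "rho_exponent G S \<le> 0"
proof -
  have "ln (rho G S) \<le> 0"
    using rho_pos[OF assms] rho_le_1[OF assms(1-3)] by simp
  moreover have "0 \<le> ln (real (card S))"
    using assms(3,4) by (simp add: Suc_leI card_gt_0_iff)
  ultimately show ?thesis
    unfolding rho_exponent_def by (simp add: divide_nonpos_nonneg)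
qed

lemma rho_exponent_transfer_finite:
  assumes G: "group G" and H: "group H" and fin: "finite (carrier H)"
    and S\<^sub>0: "S\<^sub>0 \<in> fin_sym G" and e: "0 \<le> e"
  shows "\<exists>T\<^sub>0\<in>fin_sym H. \<forall>T\<in>fin_sym H. T\<^sub>0 \<subseteq> T \<longrightarrow>
    (\<exists>S\<in>fin_sym G. S\<^sub>0 \<subseteq> S \<and> rho_exponent G S \<le> rho_exponent H T + e)"
proof (intro bexI[of _ "carrier H"] ballI impI)
  show "carrier H \<in> fin_sym H"
    using fin H by (auto simp: fin_sym_def)
  fix T assume "T \<in> fin_sym H" "carrier H \<subseteq> T"
  then have "rho_exponent H T = 0"
    using rho_carrier[OF H fin] by (auto simp: fin_sym_def rho_exponent_def)
  moreover have S: "insert \<one>\<^bsub>G\<^esub> S\<^sub>0 \<in> fin_sym G"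
    using S\<^sub>0 monoid.one_closed[OF group.is_monoid[OF G]] monoid.inv_one[OF group.is_monoid[OF G]]
    by (auto simp: fin_sym_def)
  moreover have "rho_exponent G (insert \<one>\<^bsub>G\<^esub> S\<^sub>0) \<le> 0"
    using S by (intro rho_exponent_nonpos[OF G]) (auto simp: fin_sym_def)
  ultimately show "\<exists>S\<in>fin_sym G. S\<^sub>0 \<subseteq> S \<and> rho_exponent G S \<le> rho_exponent H T + e"
    using e by (intro bexI[OF _ S]) auto
qed

lemma rho_exponent_lift_le:
  assumes G: "group G" and H: "group H" and epi: "\<pi> \<in> epi G H"
    and S\<^sub>0: "S\<^sub>0 \<in> fin_sym G" and T: "T \<in> fin_sym H" "\<pi> ` S\<^sub>0 \<subseteq> T" "2 \<le> card T"
  obtains S where "S \<in> fin_sym G" "S\<^sub>0 \<subseteq> S"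
    "rho_exponent G S \<le> rho_exponent H T + 2 * ln (real (card S\<^sub>0 + 2)) / ln (real (card T))"
proof -
  define K where "K = card S\<^sub>0 + 2"
  have TH: "T \<subseteq> carrier H" "finite T"
    using T by (auto simp: fin_sym_def)
  obtain S where S: "S \<in> fin_sym G" "S\<^sub>0 \<subseteq> S" "\<pi> ` S = T"
    and "\<And>t. t \<in> T \<Longrightarrow> card {s\<in>S. \<pi> s = t} \<le> card S\<^sub>0 + 2"
    by (rule fin_sym_lift[OF G H epi S\<^sub>0 T(1,2)]) blast
  then have fibres: "\<And>t. t \<in> \<pi> ` S \<Longrightarrow> card {s\<in>S. \<pi> s = t} \<le> K"
    by (simp add: K_def)
  have SG: "S \<subseteq> carrier G" "finite S" "S \<noteq> {}"
    using S T(3) by (auto simp: fin_sym_def)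
  have "real (card S) \<le> real K * real (card T)"
    using sum_comp_le_fibre_bound[OF SG(2) fibres, of "\<lambda>_. 1"] S(3) by simp
  moreover have "card T \<le> card S"
    using card_image_le[OF SG(2), of \<pi>] S(3) by simp
  moreover have "rho G S \<le> real K * rho H T"
    using rho_le_rho_image[OF G H _ SG(1,2) fibres] epi S(3) by (simp add: epi_def)
  moreover have "1 \<le> real K"
    by (simp add: K_def)
  ultimately have "rho_exponent G S \<le> rho_exponent H T + 2 * ln (real K) / ln (real (card T))"
    unfolding rho_exponent_def using T(3) rho_pos[OF G SG] rho_le_1[OF G SG(1,2)]
      rho_ge_inverse_sqrt_card[OF H TH]
    by (intro ln_ratio_comparison) simp_all
  then show ?thesis
    using that[OF S(1,2)] by (simp add: K_def)
qed

lemma rho_exponent_transfer_infinite: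
  assumes G: "group G" and H: "group H" and epi: "\<pi> \<in> epi G H" and inf: "infinite (carrier H)"
    and S\<^sub>0: "S\<^sub>0 \<in> fin_sym G" and e: "0 < e"
  shows "\<exists>T\<^sub>0\<in>fin_sym H. \<forall>T\<in>fin_sym H. T\<^sub>0 \<subseteq> T \<longrightarrow>
    (\<exists>S\<in>fin_sym G. S\<^sub>0 \<subseteq> S \<and> rho_exponent G S \<le> rho_exponent H T + e)"
proof -
  define c where "c = 2 * ln (real (card S\<^sub>0 + 2))"
  have "((\<lambda>n. c / ln (real n)) \<longlongrightarrow> 0) sequentially"
    by (intro tendsto_divide_0[OF tendsto_const] filterlim_at_top_imp_at_infinity
        filterlim_compose[OF ln_at_top filterlim_real_sequentially])
  then have "eventually (\<lambda>n. 2 \<le> n \<and> c / ln (real n) < e) sequentially"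
    using e by (intro eventually_conj eventually_ge_at_top order_tendstoD(2))
  then obtain N where N: "\<And>n. N \<le> n \<Longrightarrow> 2 \<le> n \<and> c / ln (real n) < e"
    by (auto simp: eventually_sequentially)
  have "\<pi> ` S\<^sub>0 \<subseteq> carrier H" "finite (\<pi> ` S\<^sub>0)"
    using S\<^sub>0 epi by (auto simp: fin_sym_def epi_def hom_in_carrier)
  then obtain T\<^sub>0 where T\<^sub>0: "T\<^sub>0 \<in> fin_sym H" "\<pi> ` S\<^sub>0 \<subseteq> T\<^sub>0" "N \<le> card T\<^sub>0"
    by (rule fin_sym_large_superset[OF H inf])
  show ?thesis
  proof (intro bexI[OF _ T\<^sub>0(1)] ballI impI)
    fix T assume T: "T \<in> fin_sym H" "T\<^sub>0 \<subseteq> T"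
    then have "N \<le> card T"
      using T\<^sub>0(3) card_mono[of T T\<^sub>0] by (auto simp: fin_sym_def)
    with N have card_T: "2 \<le> card T" "c / ln (real (card T)) < e"
      by auto
    obtain S where S: "S \<in> fin_sym G" "S\<^sub>0 \<subseteq> S"
      and le: "rho_exponent G S \<le> rho_exponent H T + c / ln (real (card T))"
      unfolding c_def by (rule rho_exponent_lift_le[OF G H epi S\<^sub>0 T(1) order_trans[OF T\<^sub>0(2) T(2)] card_T(1)])
    show "\<exists>S\<in>fin_sym G. S\<^sub>0 \<subseteq> S \<and> rho_exponent G S \<le> rho_exponent H T + e"
      using le card_T(2) S(2) by (intro bexI[OF _ S(1)]) auto
  qed
qed

theorem lemma7p4:
  fixes G :: "('a, 'c) monoid_scheme" and H :: "('b, 'd) monoid_scheme"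
    and \<pi> :: "'a \<Rightarrow> 'b"
  assumes "group G" and "group H" and "\<pi> \<in> epi G H"
  shows "r_exp G \<ge> r_exp H"
proof -
  have "liminf_incl (fin_sym G) (rho_exponent G) \<le> liminf_incl (fin_sym H) (rho_exponent H)"
  proof (rule liminf_incl_mono)
    fix S\<^sub>0 and e :: real
    assume "S\<^sub>0 \<in> fin_sym G" "0 < e"
    then show "\<exists>T\<^sub>0\<in>fin_sym H. \<forall>T\<in>fin_sym H. T\<^sub>0 \<subseteq> T \<longrightarrow>
        (\<exists>S\<in>fin_sym G. S\<^sub>0 \<subseteq> S \<and> rho_exponent G S \<le> rho_exponent H T + e)"
      using rho_exponent_transfer_finite[OF assms(1,2)] rho_exponent_transfer_infinite[OF assms]
      by (cases "finite (carrier H)") simp_all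
  qed
  then show ?thesis
    by (simp add: r_exp_eq_liminf_incl)
qed

end
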